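(* For every instance of Problem (P), the output $(x_1,\dots,x_n)$ of Algorithm 1 is an optimal solution of Problem (P).
   Context: Problem (P): given an integer $n\ge1$, reals $0<q_1\le\cdots\le q_n$, $z_1,\dots,z_n>0$ and $K>0$, maximize $\sum_{i=1}^n x_i$ subject to $0\le x_i\le q_i$ for all $i$, $0\le x_1\le x_2\le\cdots\le x_n$, and $\sum_{i=1}^n z_ix_i\le K$. For $1\le i<j\le n+1$ let $\mathrm{sum}(i,j)=z_i+\cdots+z_{j-1}$ and $\mathrm{avg}(i,j)=\mathrm{sum}(i,j)/(j-i)$. Algorithm 1: Initialize $S=\{0,n+1\}$, $y_i=\mathrm{avg}(i,n+1)$ and $x_i=0$ for $i=1,\dots,n$, and $\hat B=K$. While $\hat B>0$ and $S\ne\{0,1,\dots,n+1\}$, perform an iteration: let $i^*$ be the index $i\in\{1,\dots,n\}\setminus S$ minimizing $y_i$, ties broken in favour of the smallest index; let $i_L=\max\{j\in S:j<i^*\}$ and $i_R=\min\{j\in S:j>i^*\}$; set $d=\min\{\hat B/((i_R-i^* )y_{i^*}),\ q_{i^*}-x_{i^*}\}$; set $\hat B\leftarrow\hat B-d(i_R-i^* )y_{i^*}$; set $x_i\leftarrow x_i+d$ for all $i^*\le i<i_R$; set $y_i\leftarrow\mathrm{avg}(i,i^* )$ for all $i_L<i<i^*$; add $i^*$ to $S$. When the loop ends, output $x_1,\dots,x_n$. *)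

theory Defs
  imports Complex_Main
begin

text \<open>Vectors are functions nat \<Rightarrow> real, meaningful on indices 1..n.\<close>

definition sumz :: "(nat \<Rightarrow> real) \<Rightarrow> nat \<Rightarrow> nat \<Rightarrow> real" where
  "sumz z i j = (\<Sum>k=i..<j. z k)"

definition avgz :: "(nat \<Rightarrow> real) \<Rightarrow> nat \<Rightarrow> nat \<Rightarrow> real" where
  "avgz z i j = sumz z i j / real (j - i)"

definition feasibleP ::
  "nat \<Rightarrow> (nat \<Rightarrow> real) \<Rightarrow> (nat \<Rightarrow> real) \<Rightarrow> real \<Rightarrow> (nat \<Rightarrow> real) \<Rightarrow> bool" where
  "feasibleP n q z K x \<longleftrightarrow>
     (\<forall>i\<in>{1..n}. 0 \<le> x i \<and> x i \<le> q i) \<and>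
     0 \<le> x 1 \<and> (\<forall>i j. 1 \<le> i \<longrightarrow> i \<le> j \<longrightarrow> j \<le> n \<longrightarrow> x i \<le> x j) \<and>
     (\<Sum>i=1..n. z i * x i) \<le> K"

definition optimalP ::
  "nat \<Rightarrow> (nat \<Rightarrow> real) \<Rightarrow> (nat \<Rightarrow> real) \<Rightarrow> real \<Rightarrow> (nat \<Rightarrow> real) \<Rightarrow> bool" where
  "optimalP n q z K x \<longleftrightarrow> feasibleP n q z K x \<and>
     (\<forall>x'. feasibleP n q z K x' \<longrightarrow> (\<Sum>i=1..n. x' i) \<le> (\<Sum>i=1..n. x i))"

text \<open>State of Algorithm 1: (S, y, x, B-hat).\<close>
type_synonym alg_state = "nat set \<times> (nat \<Rightarrow> real) \<times> (nat \<Rightarrow> real) \<times> real"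

definition alg_init :: "nat \<Rightarrow> (nat \<Rightarrow> real) \<Rightarrow> real \<Rightarrow> alg_state" where
  "alg_init n z K = ({0, n+1}, (\<lambda>i. avgz z i (n+1)), (\<lambda>i. 0), K)"

definition alg_step ::
  "nat \<Rightarrow> (nat \<Rightarrow> real) \<Rightarrow> (nat \<Rightarrow> real) \<Rightarrow> alg_state \<Rightarrow> alg_state" where
  "alg_step n q z st = (case st of (S, y, x, B) \<Rightarrow>
     if B > 0 \<and> S \<noteq> {0..n+1} then
       (let istar = (LEAST i. i \<in> {1..n} - S \<and> (\<forall>j\<in>{1..n} - S. y i \<le> y j));
            iL = Max {j\<in>S. j < istar};
            iR = Min {j\<in>S. istar < j};
            d = min (B / (real (iR - istar) * y istar)) (q istar - x istar)
        in (insert istar S,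
            (\<lambda>i. if iL < i \<and> i < istar then avgz z i istar else y i),
            (\<lambda>i. if istar \<le> i \<and> i < iR then x i + d else x i),
            B - d * real (iR - istar) * y istar))
     else st)"

text \<open>Each effective iteration adds a new element of {1..n} to S, so at most n iterations
  happen; after that the step is the identity. Hence n+1 applications run the loop to the end.\<close>
definition alg_output ::
  "nat \<Rightarrow> (nat \<Rightarrow> real) \<Rightarrow> (nat \<Rightarrow> real) \<Rightarrow> real \<Rightarrow> (nat \<Rightarrow> real)" where
  "alg_output n q z K = fst (snd (snd ((alg_step n q z ^^ (n+1)) (alg_init n z K))))"

end

theory Submission
  imports Defs
begin

(*
  Algorithm 1 is water filling. The breakpoints S cut {1..n} into blocks [s, succ s) on which
  x is constant. Each iteration picks the non-breakpoint i_star whose tail [i_star, i_R) of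
  its block has the least average cost, makes it a breakpoint, and raises x on [i_star, i_R)
  until the budget runs out or x reaches the cap q i_star.

  The invariant is a complementary-slackness certificate with a multiplier m > 0 for the
  budget: every block of a breakpoint has average cost at most m, with equality unless it is
  capped, and from every other index i the rest of its block has average cost at least m.
  Averages of adjacent intervals compare like mediants, so both properties survive the split.
  With weights w_k = z_k/m - 1 the tail sums of w inside a block are then nonnegative, and Abel
  summation along the blocks gives sum w_k (x'_k - x_k) >= 0 for every feasible x', that is
  sum x' - sum x <= (sum z x' - sum z x)/m <= 0 once the budget is used up. If the loop stops
  with budget left, every index is a breakpoint and x = q.
*)

lemma sumz_eq_avgz: "real (j - i) * avgz z i j = sumz z i j"
  by (cases "i < j") (simp_all add: avgz_def sumz_def)

lemma sumz_concat: "i \<le> j \<Longrightarrow> j \<le> k \<Longrightarrow> sumz z i j + sumz z j k = sumz z i k"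
  unfolding sumz_def by (rule sum.atLeastLessThan_concat)

lemma avgz_pos:
  assumes "i < j" "\<And>k. i \<le> k \<Longrightarrow> k < j \<Longrightarrow> 0 < z k"
  shows "0 < avgz z i j"
proof -
  have "0 < sumz z i j" unfolding sumz_def using assms by (intro sum_pos) auto
  then show ?thesis using assms(1) by (simp add: avgz_def)
qed

lemma avgz_concat:
  assumes "i < j" "j < k"
  shows "real (k - i) * (avgz z i k - avgz z j k) = real (j - i) * (avgz z i j - avgz z j k)"
proof -
  have "real (k - i) * avgz z i k = real (j - i) * avgz z i j + real (k - j) * avgz z j k"
    using sumz_concat[of i j k z] assms
    by (simp only: sumz_eq_avgz less_imp_le)
  moreover have "real (k - i) = real (j - i) + real (k - j)" using assms by simp
  ultimately show ?thesis by (simp add: algebra_simps)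
qed

lemma avgz_concat_compare:
  assumes "i < j" "j < k"
  shows "avgz z i j \<le> avgz z j k \<longleftrightarrow> avgz z i k \<le> avgz z j k"
    and "avgz z j k \<le> avgz z i j \<longleftrightarrow> avgz z j k \<le> avgz z i k"
proof -
  have pos: "0 < real (k - i)" "0 < real (j - i)" using assms by auto
  have "avgz z i k \<le> avgz z j k \<longleftrightarrow> real (k - i) * (avgz z i k - avgz z j k) \<le> 0"
    using pos by (simp add: mult_le_0_iff)
  also have "\<dots> \<longleftrightarrow> real (j - i) * (avgz z i j - avgz z j k) \<le> 0"
    by (simp only: avgz_concat[OF assms])
  also have "\<dots> \<longleftrightarrow> avgz z i j \<le> avgz z j k"
    using pos by (simp add: mult_le_0_iff)
  finally show "avgz z i j \<le> avgz z j k \<longleftrightarrow> avgz z i k \<le> avgz z j k" ..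
  have "avgz z j k \<le> avgz z i k \<longleftrightarrow> 0 \<le> real (k - i) * (avgz z i k - avgz z j k)"
    using pos by (simp add: zero_le_mult_iff)
  also have "\<dots> \<longleftrightarrow> 0 \<le> real (j - i) * (avgz z i j - avgz z j k)"
    by (simp only: avgz_concat[OF assms])
  also have "\<dots> \<longleftrightarrow> avgz z j k \<le> avgz z i j"
    using pos by (simp add: zero_le_mult_iff)
  finally show "avgz z j k \<le> avgz z i j \<longleftrightarrow> avgz z j k \<le> avgz z i k" ..
qed

lemma sum_div_minus_one_eq_avgz:
  fixes m :: real
  assumes "m \<noteq> 0"
  shows "(\<Sum>k=i..<j. z k / m - 1) = real (j - i) * (avgz z i j - m) / m"
proof -
  have "(\<Sum>k=i..<j. z k / m - 1) = sumz z i j / m - real (j - i)"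
    unfolding sumz_def by (simp add: sum_subtractf sum_divide_distrib)
  then show ?thesis using assms by (simp add: sumz_eq_avgz[symmetric] field_simps)
qed

lemma sum_mult_ge_first_mult_sum:
  fixes w f :: "nat \<Rightarrow> 'a::linordered_idom"
  assumes "\<And>k. a < k \<Longrightarrow> k < t \<Longrightarrow> 0 \<le> (\<Sum>j=k..<t. w j)"
    and "\<And>i j. a \<le> i \<Longrightarrow> i \<le> j \<Longrightarrow> j < t \<Longrightarrow> f i \<le> f j"
  shows "f a * (\<Sum>j=a..<t. w j) \<le> (\<Sum>k=a..<t. w k * f k)"
  using assms
proof (induction "t - a" arbitrary: a)
  case 0
  then show ?case by simp
next
  case (Suc N)
  then have "a < t" by simp
  have IH: "f (Suc a) * (\<Sum>j=Suc a..<t. w j) \<le> (\<Sum>k=Suc a..<t. w k * f k)"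
    using Suc by simp
  have "f a * (\<Sum>j=Suc a..<t. w j) \<le> f (Suc a) * (\<Sum>j=Suc a..<t. w j)"
  proof (cases "Suc a < t")
    case True
    then show ?thesis using Suc.prems by (intro mult_right_mono) auto
  qed simp
  then show ?case
    using IH \<open>a < t\<close> by (simp add: sum.atLeast_Suc_lessThan algebra_simps)
qed

definition succ_in :: "nat set \<Rightarrow> nat \<Rightarrow> nat" where
  "succ_in S i = Min {j\<in>S. i < j}"

lemma
  assumes "finite S" "b \<in> S" "i < b"
  shows succ_in_mem: "succ_in S i \<in> S"
    and succ_in_gt: "i < succ_in S i"
    and succ_in_le: "\<And>j. j \<in> S \<Longrightarrow> i < j \<Longrightarrow> succ_in S i \<le> j"
proof -
  have "succ_in S i \<in> {j\<in>S. i < j}"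
    unfolding succ_in_def using assms by (intro Min_in) auto
  then show "succ_in S i \<in> S" "i < succ_in S i" by auto
  show "\<And>j. j \<in> S \<Longrightarrow> i < j \<Longrightarrow> succ_in S i \<le> j"
    unfolding succ_in_def using assms(1) by (intro Min_le) auto
qed

lemma succ_in_eqI:
  assumes "finite S" "j \<in> S" "i < j" "\<And>k. k \<in> S \<Longrightarrow> i < k \<Longrightarrow> j \<le> k"
  shows "succ_in S i = j"
  unfolding succ_in_def using assms by (intro Min_eqI) auto

lemma succ_in_eq_succ_in:
  assumes "finite S" "b \<in> S" "i < b" "i \<le> k" "k < succ_in S i"
  shows "succ_in S k = succ_in S i"
  using assms succ_in_mem[OF assms(1-3)] succ_in_le[OF assms(1-3)]
  by (intro succ_in_eqI) fastforce+

lemma succ_in_insert: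
  assumes "finite S" "b \<in> S" "i < b"
  shows "succ_in (insert a S) i = (if i < a \<and> a < succ_in S i then a else succ_in S i)"
  using assms succ_in_mem[OF assms] succ_in_gt[OF assms] succ_in_le[OF assms]
  by (intro succ_in_eqI) fastforce+

lemma sum_nonneg_blockwise:
  fixes g :: "nat \<Rightarrow> 'a::ordered_comm_monoid_add"
  assumes "finite S" "a \<in> S" "b \<in> S" "a \<le> b"
    and "\<And>s. s \<in> S \<Longrightarrow> a \<le> s \<Longrightarrow> s < b \<Longrightarrow> 0 \<le> (\<Sum>k=s..<succ_in S s. g k)"
  shows "0 \<le> (\<Sum>k=a..<b. g k)"
  using assms(2,4,5)
proof (induction "b - a" arbitrary: a rule: less_induct)
  case less
  show ?case
  proof (cases "a = b")
    case False
    define t where "t = succ_in S a"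
    have "a < b" using False less.prems by simp
    then have t: "t \<in> S" "a < t" "t \<le> b"
      using succ_in_mem succ_in_gt succ_in_le assms(1,3) unfolding t_def by auto
    then have "(\<Sum>k=a..<b. g k) = (\<Sum>k=a..<t. g k) + (\<Sum>k=t..<b. g k)"
      by (simp add: sum.atLeastLessThan_concat)
    moreover have "0 \<le> (\<Sum>k=a..<t. g k)" using less.prems \<open>a < b\<close> unfolding t_def by simp
    moreover have "0 \<le> (\<Sum>k=t..<b. g k)" using less t by simp
    ultimately show ?thesis by simp
  qed simp
qed

definition jumps_only_at :: "nat set \<Rightarrow> nat \<Rightarrow> (nat \<Rightarrow> real) \<Rightarrow> bool" where
  "jumps_only_at S n x \<longleftrightarrow> (\<forall>i j. i \<le> j \<longrightarrow> j \<le> n \<longrightarrow> {i<..j} \<inter> S = {} \<longrightarrow> x i = x j)"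

locale problem_P =
  fixes n :: nat and q z :: "nat \<Rightarrow> real" and K :: real
begin

definition level_certificate :: "nat set \<Rightarrow> real \<Rightarrow> (nat \<Rightarrow> real) \<Rightarrow> bool" where
  "level_certificate S m x \<longleftrightarrow> 0 < m \<and>
     (\<forall>s\<in>S \<inter> {1..n}. avgz z s (succ_in S s) \<le> m \<and> (x s = q s \<or> avgz z s (succ_in S s) = m)) \<and>
     (\<forall>i\<in>{1..n} - S. m \<le> avgz z i (succ_in S i))"

lemma certificate_tail_sum_nonneg:
  assumes S: "finite S" "n + 1 \<in> S" "s \<in> S" "s \<le> n"
    and cert: "level_certificate S m x"
    and k: "s < k" "k < succ_in S s"
  shows "0 \<le> (\<Sum>j=k..<succ_in S s. z j / m - 1)"
proof -
  define t where "t = succ_in S s"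
  have "s < n + 1" using S by simp
  have "k \<notin> S" using succ_in_le[OF S(1,2) \<open>s < n + 1\<close>] k by force
  moreover have "k \<le> n" using succ_in_le[OF S(1,2) \<open>s < n + 1\<close> S(2)] \<open>s < n + 1\<close> k by simp
  moreover have "succ_in S k = t"
    using succ_in_eq_succ_in[OF S(1,2) \<open>s < n + 1\<close>, of k] k unfolding t_def by simp
  ultimately have "m \<le> avgz z k t" using cert k by (auto simp: level_certificate_def)
  moreover have "0 < m" using cert by (simp add: level_certificate_def)
  ultimately show ?thesis unfolding t_def[symmetric] using k by (simp add: sum_div_minus_one_eq_avgz)
qed

lemma certificate_head_sign:
  assumes cert: "level_certificate S m x" and s: "s \<in> S" "1 \<le> s" "s \<le> n" and "u s \<le> q s"
  shows "0 \<le> (u s - x s) * (\<Sum>j=s..<succ_in S s. z j / m - 1)"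
proof -
  define t where "t = succ_in S s"
  have m: "0 < m" and "avgz z s t \<le> m" "x s = q s \<or> avgz z s t = m"
    using cert s unfolding level_certificate_def t_def by auto
  have W: "(\<Sum>j=s..<t. z j / m - 1) = real (t - s) * (avgz z s t - m) / m"
    using m by (simp add: sum_div_minus_one_eq_avgz)
  from \<open>x s = q s \<or> avgz z s t = m\<close> show ?thesis unfolding t_def[symmetric] W
  proof
    assume "x s = q s"
    then have "u s - x s \<le> 0" using \<open>u s \<le> q s\<close> by simp
    moreover have "real (t - s) * (avgz z s t - m) / m \<le> 0"
      using \<open>avgz z s t \<le> m\<close> m by (simp add: divide_nonpos_pos mult_nonneg_nonpos)
    ultimately show "0 \<le> (u s - x s) * (real (t - s) * (avgz z s t - m) / m)"
      by (rule mult_nonpos_nonpos)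
  qed simp
qed

lemma certificate_block_nonneg:
  assumes S: "finite S" "n + 1 \<in> S" "s \<in> S" "s \<le> n"
    and x: "jumps_only_at S n x" "level_certificate S m x"
    and u: "\<And>i j. i \<le> j \<Longrightarrow> j \<le> n \<Longrightarrow> u i \<le> u j" "\<forall>i\<in>{1..n}. u i \<le> q i" "u 0 = x 0"
  shows "0 \<le> (\<Sum>k=s..<succ_in S s. (z k / m - 1) * (u k - x k))"
proof -
  define t where "t = succ_in S s"
  have "s < n + 1" using S by simp
  have t: "t \<le> n + 1" "\<And>j. j \<in> S \<Longrightarrow> s < j \<Longrightarrow> t \<le> j"
    using succ_in_le[OF S(1,2) \<open>s < n + 1\<close>] S(2) \<open>s < n + 1\<close> unfolding t_def by auto
  have x_const: "x k = x s" if "s \<le> k" "k < t" for k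
  proof -
    have "{s<..k} \<inter> S = {}" using t(2) that by fastforce
    moreover have "k \<le> n" using that t by simp
    ultimately show ?thesis using x(1)[unfolded jumps_only_at_def, rule_format, of s k] that by simp
  qed
  have "0 \<le> (u s - x s) * (\<Sum>j=s..<t. z j / m - 1)"
    using certificate_head_sign[OF x(2) S(3)] u S(4) unfolding t_def by (cases "s = 0") auto
  also have "\<dots> \<le> (\<Sum>k=s..<t. (z k / m - 1) * (u k - x s))"
  proof (rule sum_mult_ge_first_mult_sum)
    show "\<And>k. s < k \<Longrightarrow> k < t \<Longrightarrow> 0 \<le> (\<Sum>j=k..<t. z j / m - 1)"
      using certificate_tail_sum_nonneg[OF S x(2)] unfolding t_def .
    fix i j assume "i \<le> j" "j < t"
    then show "u i - x s \<le> u j - x s" using u(1)[of i j] t by simp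
  qed
  also have "\<dots> = (\<Sum>k=s..<t. (z k / m - 1) * (u k - x k))"
    using x_const by (intro sum.cong) (simp_all only: atLeastLessThan_iff)
  finally show ?thesis unfolding t_def .
qed

lemma certificate_gap_nonneg:
  assumes S: "finite S" "0 \<in> S" "n + 1 \<in> S"
    and x: "x 0 = 0" "jumps_only_at S n x" "level_certificate S m x"
    and xp: "feasibleP n q z K xp"
  shows "0 \<le> (\<Sum>k=1..n. (z k / m - 1) * (xp k - x k))"
proof -
  \<comment> \<open>With \<open>x 0 = u 0 = 0\<close> the indices before the first breakpoint in \<open>{1..n}\<close> form the block of 0.\<close>
  define u where "u = xp(0 := 0)"
  have u_mono: "u i \<le> u j" if "i \<le> j" "j \<le> n" for i j
    using xp that unfolding feasibleP_def u_def by (cases "i = 0") auto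
  have u_le_q: "\<forall>i\<in>{1..n}. u i \<le> q i"
    using xp unfolding feasibleP_def u_def by auto
  have "0 \<le> (\<Sum>k=0..<n+1. (z k / m - 1) * (u k - x k))"
  proof (rule sum_nonneg_blockwise[OF S])
    fix s assume "s \<in> S" "s < n + 1"
    then show "0 \<le> (\<Sum>k=s..<succ_in S s. (z k / m - 1) * (u k - x k))"
      using u_mono u_le_q x by (intro certificate_block_nonneg[OF S(1,3)]) (auto simp: u_def)
  qed simp
  also have "\<dots> = (\<Sum>k=1..n. (z k / m - 1) * (xp k - x k))"
    by (simp add: atLeastLessThanSuc_atLeastAtMost sum.atLeast_Suc_atMost u_def x(1))
  finally show ?thesis .
qed

lemma optimalP_if_saturated:
  assumes "feasibleP n q z K x" "\<forall>i\<in>{1..n}. x i = q i"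
  shows "optimalP n q z K x"
  using assms unfolding optimalP_def feasibleP_def by (auto intro: sum_mono)

lemma optimalP_if_certificate:
  assumes S: "finite S" "0 \<in> S" "n + 1 \<in> S"
    and x: "feasibleP n q z K x" "(\<Sum>i=1..n. z i * x i) = K"
      "x 0 = 0" "jumps_only_at S n x" "level_certificate S m x"
  shows "optimalP n q z K x"
  unfolding optimalP_def
proof (intro conjI allI impI)
  fix xp assume xp: "feasibleP n q z K xp"
  have m: "0 < m" using x(5) by (simp add: level_certificate_def)
  have "(z k / m - 1) * (xp k - x k) = (z k * xp k - z k * x k) / m - (xp k - x k)" for k
    using m by (simp add: field_simps)
  then have "0 \<le> ((\<Sum>k=1..n. z k * xp k) - (\<Sum>k=1..n. z k * x k)) / m
                  - ((\<Sum>k=1..n. xp k) - (\<Sum>k=1..n. x k))"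
    using certificate_gap_nonneg[OF S x(3-5) xp]
    by (simp add: sum_subtractf sum_divide_distrib[symmetric])
  moreover have "(\<Sum>k=1..n. z k * xp k) \<le> (\<Sum>k=1..n. z k * x k)"
    using xp x(2) by (simp add: feasibleP_def)
  ultimately show "(\<Sum>i=1..n. xp i) \<le> (\<Sum>i=1..n. x i)"
    using m by (smt (verit) divide_nonpos_pos)
qed (fact x(1))

end

locale algorithm_1 = problem_P +
  assumes n_pos: "1 \<le> n"
    and q_pos: "\<forall>i\<in>{1..n}. 0 < q i"
    and q_mono: "\<forall>i j. 1 \<le> i \<longrightarrow> i \<le> j \<longrightarrow> j \<le> n \<longrightarrow> q i \<le> q j"
    and z_pos: "\<forall>i\<in>{1..n}. 0 < z i"
    and K_pos: "0 < K"
begin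

definition alg_inv :: "alg_state \<Rightarrow> bool" where
  "alg_inv st \<longleftrightarrow> (case st of (S, y, x, B) \<Rightarrow>
     0 \<in> S \<and> n + 1 \<in> S \<and> S \<subseteq> {0..n+1} \<and>
     feasibleP n q z K x \<and> B = K - (\<Sum>i=1..n. z i * x i) \<and>
     x 0 = 0 \<and> jumps_only_at S n x \<and>
     (0 < B \<longrightarrow> (\<forall>s\<in>S \<inter> {1..n}. x s = q s)) \<and>
     (\<forall>i\<in>{1..n} - S. y i = avgz z i (succ_in S i)) \<and>
     (\<exists>m. level_certificate S m x))"

definition running :: "alg_state \<Rightarrow> bool" where
  "running st \<longleftrightarrow> (case st of (S, y, x, B) \<Rightarrow> 0 < B \<and> S \<noteq> {0..n+1})"

lemma alg_step_idle: "\<not> running st \<Longrightarrow> alg_step n q z st = st"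
  unfolding alg_step_def running_def by (auto split: prod.splits)

lemma alg_inv_init: "alg_inv (alg_init n z K)"
proof -
  have succ: "succ_in {0, n+1} i = n + 1" if "i \<le> n" for i
    using that by (intro succ_in_eqI) auto
  define m where "m = Min ((\<lambda>i. avgz z i (n+1)) ` {1..n})"
  have "m \<in> (\<lambda>i. avgz z i (n+1)) ` {1..n}"
    unfolding m_def using n_pos by (intro Min_in) auto
  then have "0 < m" using z_pos by (auto intro!: avgz_pos)
  moreover have "\<forall>i\<in>{1..n}. m \<le> avgz z i (n+1)" unfolding m_def by simp
  ultimately have "level_certificate {0, n+1} m (\<lambda>i. 0)"
    unfolding level_certificate_def using succ by auto
  moreover have "feasibleP n q z K (\<lambda>i. 0)"
    unfolding feasibleP_def using q_pos K_pos by auto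
  ultimately show ?thesis
    unfolding alg_inv_def alg_init_def jumps_only_at_def using succ by auto
qed

end

locale alg_iteration = algorithm_1 +
  fixes S :: "nat set" and y x :: "nat \<Rightarrow> real" and B :: real
  assumes inv: "alg_inv (S, y, x, B)"
    and running: "running (S, y, x, B)"
begin

definition i_star :: nat where
  "i_star = (LEAST i. i \<in> {1..n} - S \<and> (\<forall>j\<in>{1..n} - S. y i \<le> y j))"

definition i_L :: nat where
  "i_L = Max {j\<in>S. j < i_star}"

definition i_R :: nat where
  "i_R = Min {j\<in>S. i_star < j}"

definition d :: real where
  "d = min (B / (real (i_R - i_star) * y i_star)) (q i_star - x i_star)"

definition y_next :: "nat \<Rightarrow> real" where
  "y_next = (\<lambda>i. if i_L < i \<and> i < i_star then avgz z i i_star else y i)"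

definition x_next :: "nat \<Rightarrow> real" where
  "x_next = (\<lambda>i. if i_star \<le> i \<and> i < i_R then x i + d else x i)"

definition B_next :: real where
  "B_next = B - d * real (i_R - i_star) * y i_star"

lemma alg_step_eq: "alg_step n q z (S, y, x, B) = (insert i_star S, y_next, x_next, B_next)"
proof -
  have cond: "0 < B \<and> S \<noteq> {0..n+1}" using running unfolding running_def by simp
  show ?thesis
    unfolding alg_step_def prod.case Let_def if_P[OF cond] i_star_def[symmetric]
      i_L_def[symmetric] i_R_def[symmetric] d_def[symmetric]
      y_next_def[symmetric] x_next_def[symmetric] B_next_def[symmetric] ..
qed

lemma S_inv: "0 \<in> S" "n + 1 \<in> S" "S \<subseteq> {0..n+1}" "finite S"
  using inv unfolding alg_inv_def by (auto intro: finite_subset)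

lemma B_pos: "0 < B"
  using running unfolding running_def by simp

lemma x_inv:
  "feasibleP n q z K x" "B = K - (\<Sum>i=1..n. z i * x i)" "x 0 = 0" "jumps_only_at S n x"
  "\<forall>s\<in>S \<inter> {1..n}. x s = q s"
  using inv B_pos unfolding alg_inv_def by auto

lemma y_inv: "\<forall>i\<in>{1..n} - S. y i = avgz z i (succ_in S i)"
  using inv unfolding alg_inv_def by auto

lemma i_star: "i_star \<in> {1..n} - S" "\<And>j. j \<in> {1..n} - S \<Longrightarrow> y i_star \<le> y j"
proof -
  obtain k where "k \<in> {0..n+1}" "k \<notin> S"
    using running S_inv(3) unfolding running_def by blast
  then have "k \<in> {1..n} - S"
    using S_inv(1,2) by (cases "k = 0 \<or> k = n + 1") auto
  then have U: "{1..n} - S \<noteq> {}" by blast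
  have "Min (y ` ({1..n} - S)) \<in> y ` ({1..n} - S)" using U by (intro Min_in) auto
  then obtain i where "i \<in> {1..n} - S" "Min (y ` ({1..n} - S)) = y i" by blast
  then have "i \<in> {1..n} - S \<and> (\<forall>j\<in>{1..n} - S. y i \<le> y j)"
    by (metis Min_le finite_Diff finite_atLeastAtMost finite_imageI image_eqI)
  then have "i_star \<in> {1..n} - S \<and> (\<forall>j\<in>{1..n} - S. y i_star \<le> y j)"
    unfolding i_star_def by (rule LeastI)
  then show "i_star \<in> {1..n} - S" "\<And>j. j \<in> {1..n} - S \<Longrightarrow> y i_star \<le> y j" by auto
qed

lemma i_R: "i_R = succ_in S i_star" "i_R \<in> S" "i_star < i_R" "i_R \<le> n + 1"
  "\<And>j. j \<in> S \<Longrightarrow> i_star < j \<Longrightarrow> i_R \<le> j"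
proof -
  show R: "i_R = succ_in S i_star" unfolding i_R_def succ_in_def ..
  have "i_star < n + 1" using i_star by simp
  note succ = succ_in_mem succ_in_gt succ_in_le
  show "i_R \<in> S" "i_star < i_R" "\<And>j. j \<in> S \<Longrightarrow> i_star < j \<Longrightarrow> i_R \<le> j"
    unfolding R using succ[OF S_inv(4,2) \<open>i_star < n + 1\<close>] by auto
  show "i_R \<le> n + 1"
    unfolding R using succ(3)[OF S_inv(4,2) \<open>i_star < n + 1\<close> S_inv(2)] \<open>i_star < n + 1\<close> by simp
qed

lemma i_L: "i_L \<in> S" "i_L < i_star" "\<And>j. j \<in> S \<Longrightarrow> j < i_star \<Longrightarrow> j \<le> i_L"
proof -
  have fin: "finite {j\<in>S. j < i_star}" using S_inv(4) by simp
  have "i_L \<in> {j\<in>S. j < i_star}"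
    unfolding i_L_def using fin S_inv(1) i_star(1) by (intro Max_in) auto
  then show "i_L \<in> S" "i_L < i_star" by auto
  show "\<And>j. j \<in> S \<Longrightarrow> j < i_star \<Longrightarrow> j \<le> i_L"
    unfolding i_L_def using fin by (intro Max_ge) auto
qed

lemma succ_in_i_L: "succ_in S i_L = i_R"
proof (rule succ_in_eqI[OF S_inv(4) i_R(2)])
  show "i_L < i_R" using i_L(2) i_R(3) by simp
  fix j assume "j \<in> S" "i_L < j"
  then show "i_R \<le> j" using i_L(3) i_R(5) i_star(1) by force
qed

lemma succ_in_between: "i_L \<le> i \<Longrightarrow> i < i_R \<Longrightarrow> succ_in S i = i_R"
  using succ_in_eq_succ_in[OF S_inv(4,2), of i_L i] succ_in_i_L i_L(2) i_star(1) by simp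

lemma y_i_star: "y i_star = avgz z i_star i_R" "0 < y i_star"
proof -
  show "y i_star = avgz z i_star i_R" using y_inv i_star(1) i_R(1) by simp
  also have "0 < avgz z i_star i_R"
    using i_R(3,4) z_pos i_star(1) by (intro avgz_pos) auto
  finally show "0 < y i_star" .
qed

lemma x_block: "i_star \<le> i \<Longrightarrow> i < i_R \<Longrightarrow> x i = x i_star"
proof -
  assume "i_star \<le> i" "i < i_R"
  then have "{i_star<..i} \<inter> S = {}" "i \<le> n" using i_R(4,5) by force+
  then show "x i = x i_star"
    using x_inv(4) \<open>i_star \<le> i\<close> unfolding jumps_only_at_def by metis
qed

lemma x_next_on_S: "s \<in> S \<Longrightarrow> x_next s = x s"
  unfolding x_next_def using i_R(5) i_star(1) by force

lemma d_bounds: "0 \<le> d" "x i_star + d \<le> q i_star" "d * (real (i_R - i_star) * y i_star) \<le> B"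
proof -
  have L: "0 < real (i_R - i_star) * y i_star" using i_R(3) y_i_star(2) by simp
  have "x i_star \<le> q i_star" using x_inv(1) i_star(1) unfolding feasibleP_def by auto
  moreover have "0 \<le> B / (real (i_R - i_star) * y i_star)"
    using B_pos L by (metis divide_nonneg_pos less_eq_real_def)
  ultimately show "0 \<le> d" unfolding d_def by simp
  have "d \<le> q i_star - x i_star" unfolding d_def by (rule min.cobounded2)
  then show "x i_star + d \<le> q i_star" by simp
  have "d \<le> B / (real (i_R - i_star) * y i_star)" unfolding d_def by (rule min.cobounded1)
  then show "d * (real (i_R - i_star) * y i_star) \<le> B" using pos_le_divide_eq[OF L] by blast
qed

lemma cost_x_next:
  "(\<Sum>i=1..n. z i * x_next i) = (\<Sum>i=1..n. z i * x i) + d * (real (i_R - i_star) * y i_star)"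
proof -
  have "(\<Sum>i=1..n. z i * x_next i)
      = (\<Sum>i=1..n. z i * x i) + (\<Sum>i\<in>{1..n} \<inter> {i. i_star \<le> i \<and> i < i_R}. d * z i)"
    unfolding x_next_def
    by (simp add: sum.inter_restrict algebra_simps if_distrib sum.distrib[symmetric] cong: if_cong)
  also have "{1..n} \<inter> {i. i_star \<le> i \<and> i < i_R} = {i_star..<i_R}" using i_star(1) i_R(4) by auto
  also have "(\<Sum>i\<in>{i_star..<i_R}. d * z i) = d * sumz z i_star i_R"
    by (simp add: sumz_def sum_distrib_left)
  also have "sumz z i_star i_R = real (i_R - i_star) * y i_star"
    by (simp add: sumz_eq_avgz y_i_star(1))
  finally show ?thesis .
qed

lemma B_next_eq: "B_next = K - (\<Sum>i=1..n. z i * x_next i)"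
  using cost_x_next x_inv(2) unfolding B_next_def by (simp add: mult.assoc)

lemma x_next_mono:
  assumes "1 \<le> i" "i \<le> j" "j \<le> n"
  shows "x_next i \<le> x_next j"
proof -
  have x_mono: "x i' \<le> x j'" if "1 \<le> i'" "i' \<le> j'" "j' \<le> n" for i' j'
    using x_inv(1) that unfolding feasibleP_def by blast
  show ?thesis
  proof (cases "i_star \<le> i \<and> i < i_R \<and> i_R \<le> j")
    case True
    have "x_next i = x i_star + d" unfolding x_next_def using True x_block[of i] by simp
    also have "\<dots> \<le> q i_star" by (rule d_bounds(2))
    also have "\<dots> \<le> q i_R" using q_mono i_star(1) i_R(3) True assms by auto
    also have "\<dots> = x i_R" using x_inv(5) i_R(2,3) i_star(1) True assms by auto
    also have "\<dots> \<le> x j" using x_mono[of i_R j] True assms i_R(3) i_star(1) by simp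
    also have "\<dots> = x_next j" unfolding x_next_def using True by simp
    finally show ?thesis .
  next
    case False
    then show ?thesis
      using x_mono[OF assms] d_bounds(1) assms unfolding x_next_def by auto
  qed
qed

lemma x_next_feasible: "feasibleP n q z K x_next"
proof -
  have "0 \<le> x_next i \<and> x_next i \<le> q i" if "i \<in> {1..n}" for i
  proof (cases "i_star \<le> i \<and> i < i_R")
    case True
    then have "x_next i = x i_star + d" unfolding x_next_def using x_block[of i] by simp
    moreover have "q i_star \<le> q i" using q_mono i_star(1) True that by auto
    moreover have "0 \<le> x i_star" using x_inv(1) i_star(1) unfolding feasibleP_def by auto
    ultimately show ?thesis using d_bounds(1,2) by linarith
  next
    case False
    then show ?thesis using x_inv(1) that unfolding x_next_def feasibleP_def by auto
  qed
  moreover have "0 \<le> B_next" using d_bounds(3) unfolding B_next_def by (simp add: mult.assoc)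
  ultimately show ?thesis
    unfolding feasibleP_def using x_next_mono B_next_eq n_pos by auto
qed

lemma x_next_zero: "x_next 0 = 0"
  unfolding x_next_def using x_inv(3) i_star(1) by simp

lemma x_next_jumps: "jumps_only_at (insert i_star S) n x_next"
  unfolding jumps_only_at_def
proof (intro allI impI)
  fix i j assume ij: "i \<le> j" "j \<le> n" "{i<..j} \<inter> insert i_star S = {}"
  have "i_star \<notin> {i<..j}" "i_R \<notin> {i<..j}" using ij(3) i_R(2) by blast+
  then have "i_star \<le> i \<and> i < i_R \<longleftrightarrow> i_star \<le> j \<and> j < i_R" using ij(1) by auto
  moreover have "x i = x j" using ij x_inv(4) unfolding jumps_only_at_def by blast
  ultimately show "x_next i = x_next j" unfolding x_next_def by simp
qed

lemma x_next_saturated: "0 < B_next \<Longrightarrow> \<forall>s\<in>insert i_star S \<inter> {1..n}. x_next s = q s"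
proof -
  assume "0 < B_next"
  then have "d \<noteq> B / (real (i_R - i_star) * y i_star)"
    using y_i_star(2) i_R(3) unfolding B_next_def by auto
  then have "d = q i_star - x i_star" unfolding d_def by (auto simp: min_def)
  then have "x_next i_star = q i_star" unfolding x_next_def using i_R(3) by simp
  then show ?thesis using x_next_on_S x_inv(5) by auto
qed

lemma succ_in_next:
  assumes "i \<le> n"
  shows "succ_in (insert i_star S) i = (if i_L \<le> i \<and> i < i_star then i_star else succ_in S i)"
proof -
  have "i < n + 1" using assms by simp
  have "i < i_star \<and> i_star < succ_in S i \<longleftrightarrow> i_L \<le> i \<and> i < i_star"
  proof
    assume *: "i < i_star \<and> i_star < succ_in S i"
    have "succ_in S i \<le> i_L" if "i < i_L"
      using succ_in_le[OF S_inv(4,2) \<open>i < n + 1\<close> i_L(1) that] .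
    then show "i_L \<le> i \<and> i < i_star" using * i_L(2) by force
  next
    assume "i_L \<le> i \<and> i < i_star"
    then show "i < i_star \<and> i_star < succ_in S i" using succ_in_between i_R(3) by simp
  qed
  then show ?thesis using succ_in_insert[OF S_inv(4,2) \<open>i < n + 1\<close>, of i_star] by simp
qed

lemma y_next_eq: "i \<in> {1..n} - insert i_star S \<Longrightarrow> y_next i = avgz z i (succ_in (insert i_star S) i)"
  using succ_in_next[of i] y_inv i_L(1) unfolding y_next_def by auto

lemma y_i_star_le_y_next:
  assumes "i \<in> {1..n} - insert i_star S"
  shows "y i_star \<le> y_next i"
proof (cases "i_L < i \<and> i < i_star")
  case True
  have "avgz z i_star i_R \<le> avgz z i i_R"
    using i_star(2)[of i] y_inv succ_in_between[of i] y_i_star(1) True assms i_R(3) by auto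
  then have "avgz z i_star i_R \<le> avgz z i i_star"
    using avgz_concat_compare(2)[of i i_star i_R z] True i_R(3) by simp
  then show ?thesis unfolding y_next_def using True y_i_star(1) by simp
next
  case False
  then show ?thesis unfolding y_next_def using i_star(2) assms by auto
qed

lemma certificate_next: "level_certificate (insert i_star S) (y i_star) x_next"
proof -
  obtain m where cert: "level_certificate S m x" using inv unfolding alg_inv_def by auto
  have m_le: "m \<le> y i_star"
    using cert i_star(1) y_i_star(1) i_R(1) unfolding level_certificate_def by auto
  have old_point: "avgz z s (succ_in (insert i_star S) s) \<le> y i_star" if "s \<in> S \<inter> {1..n}" for s
  proof (cases "s = i_L")
    case True
    have "avgz z i_L (succ_in S i_L) \<le> m"
      using cert that True unfolding level_certificate_def by blast
    then have "avgz z i_L i_R \<le> avgz z i_star i_R" using m_le succ_in_i_L y_i_star(1) by simp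
    then have "avgz z i_L i_star \<le> avgz z i_star i_R"
      using avgz_concat_compare(1)[of i_L i_star i_R z] i_L(2) i_R(3) by simp
    then show ?thesis using succ_in_next[of i_L] True that i_L(2) y_i_star(1) by simp
  next
    case False
    then have outside: "\<not> (i_L \<le> s \<and> s < i_star)" using that i_L(3) by force
    have "s \<le> n" using that by simp
    from trans[OF succ_in_next[OF this] if_not_P[OF outside]]
    have "succ_in (insert i_star S) s = succ_in S s" .
    moreover have "avgz z s (succ_in S s) \<le> m"
      using cert that unfolding level_certificate_def by blast
    ultimately show ?thesis using m_le by simp
  qed
  have "succ_in (insert i_star S) i_star = i_R" using succ_in_next[of i_star] i_star(1) i_R(1) by simp
  then show ?thesis
    unfolding level_certificate_def
    using y_i_star old_point x_next_on_S x_inv(5) y_i_star_le_y_next y_next_eq by auto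
qed

lemma alg_inv_next: "alg_inv (alg_step n q z (S, y, x, B))"
  unfolding alg_step_eq alg_inv_def
  using S_inv i_star(1) x_next_feasible B_next_eq x_next_zero x_next_jumps x_next_saturated
    y_next_eq certificate_next by auto

lemma card_next: "card (fst (alg_step n q z (S, y, x, B))) = Suc (card S)"
  unfolding alg_step_eq using S_inv(4) i_star(1) by simp

end

context algorithm_1
begin

lemma alg_step_running:
  assumes "alg_inv st" "running st"
  shows "alg_inv (alg_step n q z st)" "card (fst (alg_step n q z st)) = Suc (card (fst st))"
proof -
  obtain S y x B where st: "st = (S, y, x, B)" by (cases st)
  interpret alg_iteration n q z K S y x B
    using assms unfolding st by unfold_locales
  show "alg_inv (alg_step n q z st)" "card (fst (alg_step n q z st)) = Suc (card (fst st))"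
    unfolding st using alg_inv_next card_next by simp_all
qed

lemma alg_inv_iterate:
  defines "st k \<equiv> (alg_step n q z ^^ k) (alg_init n z K)"
  shows "alg_inv (st k) \<and> (running (st k) \<longrightarrow> k + 2 \<le> card (fst (st k)))"
proof (induction k)
  case 0
  then show ?case using alg_inv_init n_pos unfolding st_def by (simp add: alg_init_def)
next
  case (Suc k)
  have step: "st (Suc k) = alg_step n q z (st k)" unfolding st_def by simp
  show ?case
  proof (cases "running (st k)")
    case True
    then show ?thesis using Suc alg_step_running[of "st k"] unfolding step by simp
  next
    case False
    then show ?thesis using Suc alg_step_idle[OF False] unfolding step by simp
  qed
qed

lemma alg_final_state:
  assumes "(alg_step n q z ^^ (n+1)) (alg_init n z K) = (S, y, x, B)"
  shows "alg_inv (S, y, x, B)" "\<not> running (S, y, x, B)"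
proof -
  show inv: "alg_inv (S, y, x, B)" using alg_inv_iterate[of "n+1"] assms by simp
  then have "card S \<le> card {0..n+1}" unfolding alg_inv_def by (intro card_mono) auto
  then show "\<not> running (S, y, x, B)" using alg_inv_iterate[of "n+1"] assms by simp
qed

lemma optimalP_if_stopped:
  assumes inv: "alg_inv (S, y, x, B)" and stop: "\<not> running (S, y, x, B)"
  shows "optimalP n q z K x"
proof (cases "0 < B")
  case True
  then have "S = {0..n+1}" using stop unfolding running_def by simp
  then show ?thesis using inv unfolding alg_inv_def by (intro optimalP_if_saturated) (auto simp: True)
next
  case False
  obtain m where S: "0 \<in> S" "n + 1 \<in> S" "S \<subseteq> {0..n+1}"
    and x: "feasibleP n q z K x" "B = K - (\<Sum>i=1..n. z i * x i)" "x 0 = 0" "jumps_only_at S n x"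
      "level_certificate S m x"
    using inv unfolding alg_inv_def by auto
  have "(\<Sum>i=1..n. z i * x i) = K" using x(1,2) False unfolding feasibleP_def by simp
  then show ?thesis
    using S x by (intro optimalP_if_certificate[of S x m]) (auto intro: finite_subset)
qed

end

theorem theorem3:
  fixes n :: nat and q z :: "nat \<Rightarrow> real" and K :: real
  assumes "n \<ge> 1"
    and "\<forall>i\<in>{1..n}. 0 < q i"
    and "\<forall>i j. 1 \<le> i \<longrightarrow> i \<le> j \<longrightarrow> j \<le> n \<longrightarrow> q i \<le> q j"
    and "\<forall>i\<in>{1..n}. 0 < z i"
    and "K > 0"
  shows "optimalP n q z K (alg_output n q z K)"
proof -
  interpret algorithm_1 n q z K using assms by unfold_locales auto
  obtain S y x B where final: "(alg_step n q z ^^ (n+1)) (alg_init n z K) = (S, y, x, B)"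
    by (metis prod_cases4)
  then have "alg_output n q z K = x" unfolding alg_output_def by simp
  then show ?thesis using optimalP_if_stopped alg_final_state[OF final] by simp
qed

end
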